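(* Let $\lambda\in\mathbb{R}\setminus\{0\}$, $k\in\mathbb{Z}$, $u\in\mathbb{C}$ with $u\neq 1$, and $x\in\mathbb{R}$. Then for every integer $n\geq 0$, \[ \sum_{m=0}^{n}\binom{n}{m}FG_{m,\lambda}^{(k)}(x,u)\,(1)_{n-m,\lambda}-u\,FG_{n,\lambda}^{(k)}(x,u) =(1-u)\,n\sum_{m=0}^{n-1}\frac{\binom{n-1}{m}}{m+1}\sum_{j=1}^{m+1}\frac{(1)_{j,\lambda}}{j^{k-1}}S_{1,\lambda}(m+1,j)\,(x)_{n-1-m,\lambda}. \]
   Context: All generating functions are formal power series in $t$. For $z\in\mathbb{C}$: $(z)_{0,\lambda}=1$ and $(z)_{n,\lambda}=z(z-\lambda)\cdots(z-(n-1)\lambda)$ for $n\ge1$. The degenerate exponential is $e_\lambda^{z}(t)=(1+\lambda t)^{z/\lambda}=\sum_{n\ge0}(z)_{n,\lambda}\frac{t^n}{n!}$, and $e_\lambda(t)=e_\lambda^{1}(t)$. Also $\log_\lambda(1+t)=\frac{1}{\lambda}\big((1+t)^\lambda-1\big)$. The degenerate Stirling numbers of the first kind are defined by $\frac{1}{j!}(\log_\lambda(1+t))^j=\sum_{n\ge j}S_{1,\lambda}(n,j)\frac{t^n}{n!}$. The modified degenerate polyexponential function is $\mathrm{Ei}_{k,\lambda}(x)=\sum_{n\ge1}\frac{(1)_{n,\lambda}}{n^k(n-1)!}x^n$. The degenerate poly-Frobenius-Genocchi polynomials are defined by $\sum_{n\ge0}FG_{n,\lambda}^{(k)}(x,u)\frac{t^n}{n!}=\frac{(1-u)\,\mathrm{Ei}_{k,\lambda}(\log_\lambda(1+t))}{e_\lambda(t)-u}e_\lambda^{x}(t)$.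 *)

theory Defs
  imports "HOL-Analysis.Analysis" "HOL-Computational_Algebra.Formal_Power_Series"
begin

definition dfall :: "complex \<Rightarrow> real \<Rightarrow> nat \<Rightarrow> complex" where
  "dfall z lam n = (\<Prod>i<n. z - of_nat i * complex_of_real lam)"

definition dexp_fps :: "real \<Rightarrow> complex \<Rightarrow> complex fps" where
  "dexp_fps lam z = Abs_fps (\<lambda>n. dfall z lam n / fact n)"

definition dlog_fps :: "real \<Rightarrow> complex fps" where
  "dlog_fps lam = fps_const (1 / complex_of_real lam) * (fps_binomial (complex_of_real lam) - 1)"

definition S1 :: "real \<Rightarrow> nat \<Rightarrow> nat \<Rightarrow> complex" where
  "S1 lam n j = fact n * fps_nth (fps_const (1 / fact j) * dlog_fps lam ^ j) n"

definition Ei_fps :: "int \<Rightarrow> real \<Rightarrow> complex fps" where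
  "Ei_fps k lam = Abs_fps (\<lambda>n. if n = 0 then 0
      else dfall 1 lam n / ((of_nat n) powi k * fact (n - 1)))"

definition FG_gf :: "int \<Rightarrow> real \<Rightarrow> complex \<Rightarrow> complex \<Rightarrow> complex fps" where
  "FG_gf k lam x u = fps_const (1 - u) * (Ei_fps k lam oo dlog_fps lam)
      * inverse (dexp_fps lam 1 - fps_const u) * dexp_fps lam x"

definition FG :: "nat \<Rightarrow> real \<Rightarrow> int \<Rightarrow> complex \<Rightarrow> complex \<Rightarrow> complex" where
  "FG n lam k x u = fact n * fps_nth (FG_gf k lam x u) n"

end

theory Submission
  imports Defs
begin

text \<open>
  Multiplying the generating function of the FG polynomials by its denominator
  \<open>e_\<lambda>(t) - u\<close> leaves \<open>(1 - u) Ei_{k,\<lambda>}(log_\<lambda>(1 + t)) e_\<lambda>^x(t)\<close>; the claim compares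
  the coefficients of \<open>t^n/n!\<close>, each side being a binomial convolution of exponential
  generating functions. The \<open>N\<close>-th exponential coefficient of the composite series is
  \<open>\<Sum>_j (1)_{j,\<lambda>} / j^{k-1} S_{1,\<lambda>}(N, j)\<close>, which vanishes for \<open>N = 0\<close>, so absorption
  \<open>(n choose m+1) = n/(m+1) (n-1 choose m)\<close> gives the stated form.
\<close>

unbundle no vec_syntax
notation fps_nth (infixl \<open>$\<close> 75)

lemma fps_mult_nth_exponential:
  fixes a b :: "nat \<Rightarrow> 'a::field_char_0"
  shows "fact n * (Abs_fps (\<lambda>m. a m / fact m) * Abs_fps (\<lambda>m. b m / fact m)) $ n
       = (\<Sum>m=0..n. of_nat (n choose m) * a m * b (n - m))"
  unfolding fps_mult_nth sum_distrib_left
  by (rule sum.cong[OF refl]) (simp add: binomial_fact)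

lemma sum_binomial_absorption:
  fixes c :: "nat \<Rightarrow> 'a::field_char_0"
  assumes "c 0 = 0"
  shows "(\<Sum>m=0..n. of_nat (n choose m) * c m)
       = of_nat n * (\<Sum>m=0..<n. of_nat ((n - 1) choose m) / of_nat (m + 1) * c (m + 1))"
proof -
  have "(\<Sum>m=0..n. of_nat (n choose m) * c m) = (\<Sum>m=0..<n. of_nat (n choose Suc m) * c (Suc m))"
    using assms by (simp del: binomial_Suc_Suc add: atLeast0AtMost atLeast0LessThan sum.atMost_shift)
  also have "\<dots> = (\<Sum>m=0..<n. of_nat n * (of_nat ((n - 1) choose m) / of_nat (m + 1) * c (m + 1)))"
  proof (rule sum.cong[OF refl])
    fix m
    have "of_nat (Suc m) * of_nat (n choose Suc m) = (of_nat n * of_nat ((n - 1) choose m) :: 'a)"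
      using binomial_absorption[of m n] by (metis of_nat_mult)
    then show "of_nat (n choose Suc m) * c (Suc m)
        = of_nat n * (of_nat ((n - 1) choose m) / of_nat (m + 1) * c (m + 1))"
      by (simp add: field_simps del: of_nat_Suc)
  qed
  finally show ?thesis by (simp add: sum_distrib_left)
qed

lemma FG_gf_eq_Abs_fps: "FG_gf k lam x u = Abs_fps (\<lambda>m. FG m lam k x u / fact m)"
  by (simp add: FG_def fps_eq_iff)

lemma Ei_fps_nth_Suc:
  "Ei_fps k lam $ Suc j = dfall 1 lam (Suc j) / (of_nat (Suc j) powi (k - 1) * fact (Suc j))"
proof -
  have "(of_nat (Suc j) :: complex) powi k = of_nat (Suc j) * of_nat (Suc j) powi (k - 1)"
    by (metis of_nat_neq_0 power_int_add_1' diff_add_cancel)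
  then show ?thesis
    by (simp add: Ei_fps_def mult_ac)
qed

lemma Ei_fps_compose_dlog_fps_nth:
  "(Ei_fps k lam oo dlog_fps lam) $ N
     = (\<Sum>j=1..N. dfall 1 lam j / of_nat j powi (k - 1) * S1 lam N j) / fact N"
proof -
  have "(Ei_fps k lam oo dlog_fps lam) $ N = (\<Sum>j=1..N. Ei_fps k lam $ j * dlog_fps lam ^ j $ N)"
    by (simp add: fps_compose_nth Ei_fps_def sum.atLeast_Suc_atMost)
  also have "\<dots> = (\<Sum>j=1..N. dfall 1 lam j / of_nat j powi (k - 1) * S1 lam N j / fact N)"
  proof (rule sum.cong[OF refl])
    fix j assume "j \<in> {1..N}"
    then obtain i where "j = Suc i" by (cases j) auto
    then show "Ei_fps k lam $ j * dlog_fps lam ^ j $ N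
        = dfall 1 lam j / of_nat j powi (k - 1) * S1 lam N j / fact N"
      by (simp add: Ei_fps_nth_Suc S1_def)
  qed
  finally show ?thesis
    by (simp add: sum_divide_distrib)
qed

lemma FG_gf_times_denominator:
  assumes "u \<noteq> 1"
  shows "FG_gf k lam x u * (dexp_fps lam 1 - fps_const u)
       = fps_const (1 - u) * (Ei_fps k lam oo dlog_fps lam) * dexp_fps lam x"
proof -
  have "(dexp_fps lam 1 - fps_const u) $ 0 \<noteq> 0"
    using assms by (simp add: dexp_fps_def dfall_def)
  then have "inverse (dexp_fps lam 1 - fps_const u) * (dexp_fps lam 1 - fps_const u) = 1"
    by (rule inverse_mult_eq_1)
  then show ?thesis
    unfolding FG_gf_def by (metis (no_types, lifting) mult.assoc mult.commute mult_1_right)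
qed

theorem theorem2:
  fixes lam :: real and k :: int and u :: complex and x :: real and n :: nat
  assumes "lam \<noteq> 0" and "u \<noteq> 1"
  shows "(\<Sum>m=0..n. of_nat (n choose m) * FG m lam k (complex_of_real x) u * dfall 1 lam (n - m))
           - u * FG n lam k (complex_of_real x) u
         = (1 - u) * of_nat n * (\<Sum>m=0..<n. of_nat ((n - 1) choose m) / of_nat (m + 1) *
             (\<Sum>j=1..m+1. dfall 1 lam j / (of_nat j) powi (k - 1) * S1 lam (m + 1) j)
             * dfall (complex_of_real x) lam (n - 1 - m))"
proof -
  define y where "y = complex_of_real x"
  define A where "A N = (\<Sum>j=1..N. dfall 1 lam j / of_nat j powi (k - 1) * S1 lam N j)" for N
  have Ei_dlog: "Ei_fps k lam oo dlog_fps lam = Abs_fps (\<lambda>N. A N / fact N)"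
    by (simp add: fps_eq_iff Ei_fps_compose_dlog_fps_nth A_def)
  have "(\<Sum>m=0..n. of_nat (n choose m) * FG m lam k y u * dfall 1 lam (n - m)) - u * FG n lam k y u
      = fact n * (FG_gf k lam y u * (dexp_fps lam 1 - fps_const u)) $ n"
    using fps_mult_nth_exponential[of n "\<lambda>m. FG m lam k y u" "\<lambda>m. dfall 1 lam m"]
    by (simp add: FG_gf_eq_Abs_fps dexp_fps_def algebra_simps)
  also have "\<dots> = (1 - u) * (fact n * (Abs_fps (\<lambda>N. A N / fact N) * dexp_fps lam y) $ n)"
    by (simp add: FG_gf_times_denominator[OF assms(2)] Ei_dlog mult.assoc)
  also have "\<dots> = (1 - u) * (\<Sum>m=0..n. of_nat (n choose m) * (A m * dfall y lam (n - m)))"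
    by (simp add: dexp_fps_def fps_mult_nth_exponential mult.assoc)
  also have "\<dots> = (1 - u) * of_nat n *
      (\<Sum>m=0..<n. of_nat ((n - 1) choose m) / of_nat (m + 1) * A (m + 1) * dfall y lam (n - 1 - m))"
    by (subst sum_binomial_absorption) (simp_all add: A_def mult.assoc)
  finally show ?thesis
    by (simp add: y_def A_def)
qed

end
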